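(* For $\alpha>0$, $t>0$ and $x\in\mathbb{R}$, $$\mathcal{H}_\alpha(x,t)=t^{\alpha}e^{\frac{x^2}{2t}}\left(\mathcal{D}_{-}^{\alpha}\, e^{-\frac{(\cdot)^2}{2t}}\right)(x),$$ where the Liouville fractional derivative is taken in the variable $x$.
   Context: $U(a,z)$ is the standard (Whittaker) parabolic cylinder function, $D_\nu(z)=U(-\nu-\tfrac12,z)$, and $\mathcal{H}_\alpha(x,t)=t^{\frac{\alpha}{2}}e^{\frac{x^2}{4t}}U(-\alpha-\tfrac12,\tfrac{x}{\sqrt t})$ for $t>0$. The Liouville right-sided fractional integral is $(I_-^{\beta}\varphi)(x)=\frac{1}{\Gamma(\beta)}\int_x^\infty (y-x)^{\beta-1}\varphi(y)\,dy$ for $\beta>0$. The Liouville fractional derivative is: if $\alpha>0$ is not an integer and $m=[\alpha]+1$, $(\mathcal{D}_-^{\alpha}\varphi)(x)=(-1)^m\frac{d^m}{dx^m}(I_-^{m-\alpha}\varphi)(x)$; if $\alpha=m\in\mathbb{N}$, $(\mathcal{D}_-^{\alpha}\varphi)(x)=(-1)^m\varphi^{(m)}(x)$. *)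

theory Defs
  imports "HOL-Analysis.Analysis"
begin

definition kummerM :: "real \<Rightarrow> real \<Rightarrow> real \<Rightarrow> real" where
  "kummerM a b z = (\<Sum>n. pochhammer a n / (pochhammer b n * fact n) * z ^ n)"

text \<open>Whittaker's parabolic cylinder function U(a,z) for real a, z, via DLMF 12.4.1,
  12.7.12, 12.7.13, 12.2.6, 12.2.7 (rGamma = 1/Gamma, vanishing at the poles).\<close>
definition pcU :: "real \<Rightarrow> real \<Rightarrow> real" where
  "pcU a z =
     sqrt pi * rGamma (3/4 + a/2) / 2 powr (a/2 + 1/4)
       * (exp (- (z^2) / 4) * kummerM (a/2 + 1/4) (1/2) (z^2 / 2))
   - sqrt pi * rGamma (1/4 + a/2) / 2 powr (a/2 - 1/4)
       * (z * exp (- (z^2) / 4) * kummerM (a/2 + 3/4) (3/2) (z^2 / 2))"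

definition calH :: "real \<Rightarrow> real \<Rightarrow> real \<Rightarrow> real" where
  "calH \<alpha> x t = t powr (\<alpha> / 2) * exp (x^2 / (4 * t)) * pcU (- \<alpha> - 1/2) (x / sqrt t)"

definition liouville_int_minus :: "real \<Rightarrow> (real \<Rightarrow> real) \<Rightarrow> real \<Rightarrow> real" where
  "liouville_int_minus \<beta> \<phi> x =
     (LBINT y:{x<..}. (y - x) powr (\<beta> - 1) * \<phi> y) / Gamma \<beta>"

definition liouville_deriv_minus :: "real \<Rightarrow> (real \<Rightarrow> real) \<Rightarrow> real \<Rightarrow> real" where
  "liouville_deriv_minus \<alpha> \<phi> x =
     (if \<alpha> \<in> \<nat> then (-1) ^ nat \<lfloor>\<alpha>\<rfloor> * (deriv ^^ nat \<lfloor>\<alpha>\<rfloor>) \<phi> x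
      else (let m = nat \<lfloor>\<alpha>\<rfloor> + 1 in
            (-1) ^ m * (deriv ^^ m) (liouville_int_minus (real m - \<alpha>) \<phi>) x))"

end

theory Submission
  imports Defs
begin

text \<open>
  Put S_\<beta>(z) = \<Sum>_k (-1)^k b_k z^k / k! with b_(k+2) = (\<beta> + k) b_k, the initial values b_0, b_1
  being chosen such that S_\<beta>(z) = e^(z^2/4) U(\<beta> - 1/2, z) (Kummer's form of U), and
  \<Phi>_\<beta>(z) = e^(-z^2/2) S_\<beta>(z) = e^(-z^2/4) D_(-\<beta>)(z). Termwise differentiation gives
  \<Phi>_\<beta>' = -\<Phi>_(\<beta>-1). For \<beta> > 0, Legendre's duplication formula identifies \<Gamma>(\<beta>) b_k with the
  half-Gaussian moment \<integral>_0^\<infinity> s^(\<beta>+k-1) e^(-s^2/2) ds, so expanding e^(-zs) and integrating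
  termwise gives the Laplace integral \<Gamma>(\<beta>) \<Phi>_\<beta>(z) = \<integral>_0^\<infinity> s^(\<beta>-1) e^(-(z+s)^2/2) ds.
  After the substitution y = x + s \<surd>t this says that I_-^\<beta> maps the Gaussian e^(-y^2/(2t)) to
  t^(\<beta>/2) \<Phi>_\<beta>(x/\<surd>t). Every application of -d/dx lowers the index by one, so D_-^\<alpha> maps it
  to t^(-\<alpha>/2) \<Phi>_(-\<alpha>)(x/\<surd>t), which is the claim.
\<close>

lemma summable_abs_two_step_ratio:
  fixes f :: "nat \<Rightarrow> real"
  assumes "\<And>k. k \<ge> N \<Longrightarrow> \<bar>f (Suc (Suc k))\<bar> \<le> \<bar>f k\<bar> / 4"
  shows "summable (\<lambda>k. \<bar>f k\<bar>)"
proof -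
  define C where "C = max (\<bar>f N\<bar> * 2^N) (\<bar>f (Suc N)\<bar> * 2^Suc N)"
  have bound: "\<bar>f k\<bar> \<le> C / 2^k" if "k \<ge> N" for k
    using that
  proof (induction k rule: less_induct)
    case (less k)
    consider "k = N" | "k = Suc N" | j where "k = Suc (Suc j)" "j \<ge> N"
      using less.prems by (metis Suc_le_D le_SucE le_antisym not_less_eq_eq)
    then show ?case
    proof cases
      case (3 j)
      have "\<bar>f k\<bar> \<le> \<bar>f j\<bar> / 4" using assms 3 by simp
      also have "\<dots> \<le> C / 2^j / 4" using less.IH[of j] 3 by simp
      finally show ?thesis using 3 by simp
    qed (auto simp: C_def field_simps)
  qed
  show ?thesis
  proof (rule summable_comparison_test)
    show "\<exists>N'. \<forall>k\<ge>N'. norm \<bar>f k\<bar> \<le> C * (1/2)^k"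
      using bound by (auto simp: power_one_over)
    show "summable (\<lambda>k. C * (1/2::real)^k)"
      by (intro summable_mult summable_geometric) simp
  qed
qed

lemma summable_strict_mono_reindex_abs:
  fixes f :: "nat \<Rightarrow> real"
  assumes "strict_mono g" and "summable (\<lambda>k. \<bar>f k\<bar>)"
  shows "summable (\<lambda>j. f (g j))"
proof -
  define h where "h n = (if n \<in> range g then f n else 0)" for n
  have "summable h"
    by (rule summable_norm_cancel, rule summable_comparison_test[OF _ assms(2)])
       (auto simp: h_def)
  then have "summable (\<lambda>j. h (g j))"
    by (subst summable_mono_reindex[OF assms(1)]) (auto simp: h_def)
  then show ?thesis by (simp add: h_def)
qed

lemma sums_cmult_suminf:
  fixes c :: "'a::{real_normed_field, banach}"
  assumes "summable (\<lambda>n. c * f n)"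
  shows "(\<lambda>n. c * f n) sums (c * suminf f)"
  using assms by (cases "c = 0") (auto intro: sums_mult summable_sums)

lemma has_bochner_integral_suminf:
  fixes f :: "nat \<Rightarrow> 'a \<Rightarrow> 'b::{banach, second_countable_topology}"
  assumes "\<And>k. has_bochner_integral M (f k) (I k)"
    and "\<And>x. (\<lambda>k. f k x) sums F x"
    and "\<And>x. summable (\<lambda>k. norm (f k x))"
    and "summable (\<lambda>k. \<integral>x. norm (f k x) \<partial>M)"
  shows "has_bochner_integral M F (\<Sum>k. I k)"
proof -
  have integrable: "\<And>k. integrable M (f k)" and I: "\<And>k. integral\<^sup>L M (f k) = I k"
    using assms(1) by (auto simp: has_bochner_integral_iff)
  have F: "F = (\<lambda>x. \<Sum>k. f k x)"
    using assms(2) by (auto simp: sums_iff)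
  show ?thesis
    unfolding F has_bochner_integral_iff
    using integrable_suminf[OF integrable _ assms(4)] integral_suminf[OF integrable _ assms(4)] assms(3)
    by (simp add: I)
qed

lemma fact_double_Suc:
  "(fact (2 * j + 1) :: 'a::field_char_0) = 2^(2 * j) * pochhammer (3 / 2) j * fact j"
proof -
  have "pochhammer (3 / 2 :: 'a) j * (1 / 2) = pochhammer (1 / 2) (Suc j)"
    by (simp add: pochhammer_rec mult.commute)
  also have "\<dots> = (1 / 2 + of_nat j) * pochhammer (1 / 2) j"
    by (rule pochhammer_rec')
  finally have poch: "pochhammer (3 / 2 :: 'a) j = (2 * of_nat j + 1) * pochhammer (1 / 2) j"
    by (simp add: field_simps)
  have "(fact (2 * j + 1) :: 'a) = (2 * of_nat j + 1) * fact (2 * j)"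
    by (simp add: fact_Suc)
  then show ?thesis
    unfolding fact_double poch by (simp only: mult_ac)
qed

lemma Gamma_integral_real':
  assumes "x > (0::real)"
  shows "((\<lambda>t. t powr (x - 1) / exp t) has_integral Gamma x) {0<..}"
proof -
  have "((\<lambda>t. if t \<in> {0<..} then t powr (x - 1) / exp t else 0) has_integral Gamma x) {0..}"
    by (rule has_integral_spike[of "{0}", OF _ _ Gamma_integral_real[OF assms]]) auto
  then show ?thesis
    by (subst (asm) has_integral_restrict) auto
qed

lemma Gamma_legendre_duplication_real:
  assumes "x > (0::real)"
  shows "Gamma x * Gamma (x + 1 / 2) = 2 powr (1 - 2 * x) * sqrt pi * Gamma (2 * x)"
proof -
  have "complex_of_real x \<notin> \<int>\<^sub>\<le>\<^sub>0" "complex_of_real x + 1 / 2 \<notin> \<int>\<^sub>\<le>\<^sub>0"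
    using assms of_real_in_nonpos_Ints_iff[of "x + 1 / 2", where 'a=complex]
    by (auto simp: of_real_in_nonpos_Ints_iff dest: nonpos_Ints_nonpos)
  note duplication = Gamma_legendre_duplication[OF this]
  have "complex_of_real x + 1 / 2 = complex_of_real (x + 1 / 2)"
    "2 * complex_of_real x = complex_of_real (2 * x)"
    "exp ((1 - 2 * complex_of_real x) * complex_of_real (ln 2)) = complex_of_real (2 powr (1 - 2 * x))"
    by (simp_all add: powr_def exp_of_real[symmetric])
  with duplication have "complex_of_real (Gamma x) * complex_of_real (Gamma (x + 1 / 2)) =
      complex_of_real (2 powr (1 - 2 * x)) * complex_of_real (sqrt pi) * complex_of_real (Gamma (2 * x))"
    by (simp only: Gamma_complex_of_real)
  then show ?thesis
    by (simp only: of_real_mult[symmetric] of_real_eq_iff)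
qed

lemma has_integral_half_gauss_moment:
  assumes "\<gamma> > (0::real)"
  shows "((\<lambda>s. s powr (\<gamma> - 1) * exp (- (s^2) / 2)) has_integral
            2 powr (\<gamma> / 2 - 1) * Gamma (\<gamma> / 2)) {0<..}"
proof -
  define f where "f u = u powr (\<gamma> / 2 - 1) / exp u" for u :: real
  have f: "(f has_integral Gamma (\<gamma> / 2)) {0<..}"
    unfolding f_def using Gamma_integral_real'[of "\<gamma> / 2"] assms by simp
  have "f absolutely_integrable_on {0<..}"
    using f by (intro nonnegative_absolutely_integrable_1) (auto simp: f_def)
  moreover have "(\<lambda>s. s^2 / 2) ` {0<..} = {(0::real)<..}"
  proof (intro equalityI subsetI)
    fix u :: real assume "u \<in> {0<..}"
    then show "u \<in> (\<lambda>s. s^2 / 2) ` {0<..}"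
      by (intro image_eqI[of _ _ "sqrt (2 * u)"]) auto
  qed auto
  moreover have "inj_on (\<lambda>s::real. s^2 / 2) {0<..}"
    by (auto simp: inj_on_def power2_eq_iff_nonneg)
  moreover have "((\<lambda>s. s^2 / 2) has_field_derivative s) (at s within {0<..})" for s :: real
    by (auto intro!: derivative_eq_intros)
  ultimately have "(\<lambda>s. \<bar>s\<bar> * f (s^2 / 2)) absolutely_integrable_on {0<..} \<and>
      integral {0<..} (\<lambda>s. \<bar>s\<bar> * f (s^2 / 2)) = Gamma (\<gamma> / 2)"
    using has_absolute_integral_change_of_variables_1'[of "{0<..}" "\<lambda>s. s^2 / 2" "\<lambda>s. s" f]
      f by (simp add: integral_unique)
  then have "((\<lambda>s. 2 powr (\<gamma> / 2 - 1) * (\<bar>s\<bar> * f (s^2 / 2))) has_integral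
      2 powr (\<gamma> / 2 - 1) * Gamma (\<gamma> / 2)) {0<..}"
    by (intro has_integral_mult_right)
       (metis integrable_integral set_lebesgue_integral_eq_integral(1))
  moreover have "2 powr (\<gamma> / 2 - 1) * (\<bar>s\<bar> * f (s^2 / 2)) = s powr (\<gamma> - 1) * exp (- (s^2) / 2)"
    if "s > 0" for s :: real
  proof -
    have "(s^2 / 2) powr (\<gamma> / 2 - 1) = s powr (\<gamma> - 2) / 2 powr (\<gamma> / 2 - 1)"
      using that by (simp add: powr_divide powr_powr flip: powr_numeral)
    moreover have "s * s powr (\<gamma> - 2) = s powr (\<gamma> - 1)"
      using that by (simp add: powr_mult_base)
    ultimately show ?thesis
      using that by (simp add: f_def exp_minus field_simps)
  qed
  ultimately show ?thesis
    by (rule has_integral_eq[rotated]) simp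
qed

lemma has_bochner_integral_half_gauss_moment:
  assumes "\<gamma> > (0::real)"
  shows "has_bochner_integral lborel
           (\<lambda>s. indicator {0<..} s * (s powr (\<gamma> - 1) * exp (- (s^2) / 2)))
           (2 powr (\<gamma> / 2 - 1) * Gamma (\<gamma> / 2))"
proof -
  let ?g = "\<lambda>s::real. indicator {0<..} s * (s powr (\<gamma> - 1) * exp (- (s^2) / 2))"
  have "integral\<^sup>N lborel ?g = ennreal (2 powr (\<gamma> / 2 - 1) * Gamma (\<gamma> / 2))"
    by (rule nn_integral_has_integral_lebesgue[OF _ has_integral_half_gauss_moment[OF assms]])
       simp
  then have "integrable lborel ?g \<and> integral\<^sup>L lborel ?g = 2 powr (\<gamma> / 2 - 1) * Gamma (\<gamma> / 2)"
    using assms by (intro nn_integral_eq_integrable[THEN iffD1]) auto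
  then show ?thesis
    by (simp add: has_bochner_integral_iff)
qed

section \<open>The series e^(z^2/4) U(\<beta> - 1/2, z)\<close>

fun pc_moment :: "real \<Rightarrow> nat \<Rightarrow> real" where
  "pc_moment \<beta> 0 = sqrt pi * rGamma ((\<beta> + 1) / 2) / 2 powr (\<beta> / 2)"
| "pc_moment \<beta> (Suc 0) = sqrt pi * rGamma (\<beta> / 2) / 2 powr (\<beta> / 2 - 1 / 2)"
| "pc_moment \<beta> (Suc (Suc k)) = (\<beta> + real k) * pc_moment \<beta> k"

definition pc_coeff :: "real \<Rightarrow> nat \<Rightarrow> real" where
  "pc_coeff \<beta> k = (-1)^k * pc_moment \<beta> k / fact k"

definition pc_series :: "real \<Rightarrow> real \<Rightarrow> real" where
  "pc_series \<beta> z = (\<Sum>k. pc_coeff \<beta> k * z^k)"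

text \<open>\<open>pcPhi \<beta> z\<close> is e^(-z^2/4) D_(-\<beta>)(z), see \<open>pcU_eq_pc_series\<close>.\<close>

definition pcPhi :: "real \<Rightarrow> real \<Rightarrow> real" where
  "pcPhi \<beta> z = exp (- (z^2) / 2) * pc_series \<beta> z"

lemma pc_coeff_Suc_Suc:
  "pc_coeff \<beta> (Suc (Suc k)) = (\<beta> + k) / ((real k + 1) * (real k + 2)) * pc_coeff \<beta> k"
  by (simp add: pc_coeff_def fact_Suc algebra_simps)

lemma summable_abs_pc_coeff: "summable (\<lambda>k. \<bar>pc_coeff \<beta> k * z^k\<bar>)"
proof (rule summable_abs_two_step_ratio)
  fix k assume k: "k \<ge> nat \<lceil>\<bar>\<beta>\<bar> + 8 * z^2\<rceil>"
  then have "\<bar>\<beta>\<bar> + 8 * z^2 \<le> real k" by linarith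
  moreover have "0 \<le> z^2" by simp
  ultimately have "8 * z^2 \<le> real k + 2" "\<bar>\<beta>\<bar> \<le> real k"
    by linarith+
  moreover from this(2) have "\<bar>\<beta> + k\<bar> \<le> 2 * (real k + 1)"
    by (auto simp: abs_le_iff)
  ultimately have "\<bar>\<beta> + k\<bar> * (8 * z^2) \<le> 2 * (real k + 1) * (real k + 2)"
    by (intro mult_mono) auto
  then have ratio: "\<bar>\<beta> + k\<bar> * z^2 / ((real k + 1) * (real k + 2)) \<le> 1/4"
    by (subst pos_divide_le_eq) (simp, simp add: algebra_simps)
  have "\<bar>pc_coeff \<beta> (Suc (Suc k)) * z^Suc (Suc k)\<bar>
      = \<bar>\<beta> + k\<bar> * z^2 / ((real k + 1) * (real k + 2)) * \<bar>pc_coeff \<beta> k * z^k\<bar>"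
    by (simp add: pc_coeff_Suc_Suc abs_mult power2_eq_square)
  also have "\<dots> \<le> \<bar>pc_coeff \<beta> k * z^k\<bar> / 4"
    using mult_right_mono[OF ratio abs_ge_zero] by simp
  finally show "\<bar>pc_coeff \<beta> (Suc (Suc k)) * z^Suc (Suc k)\<bar> \<le> \<bar>pc_coeff \<beta> k * z^k\<bar> / 4" .
qed

lemma pc_series_sums: "(\<lambda>k. pc_coeff \<beta> k * z^k) sums pc_series \<beta> z"
  unfolding pc_series_def by (rule summable_sums[OF summable_rabs_cancel[OF summable_abs_pc_coeff]])

lemma pc_moment_pred_Suc: "pc_moment (\<beta> - 1) (Suc k) = (\<beta> - 1) * pc_moment \<beta> k"
proof (induction \<beta> k rule: pc_moment.induct)
  case (1 \<beta>)
  have r: "rGamma ((\<beta> - 1) / 2) = (\<beta> - 1) / 2 * rGamma ((\<beta> + 1) / 2)"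
    using rGamma_plus1[of "(\<beta> - 1) / 2"] by (simp add: field_simps)
  have p: "(2::real) powr ((\<beta> - 1) / 2 - 1 / 2) = 2 powr (\<beta> / 2) / 2"
    by (simp add: powr_diff diff_divide_distrib)
  show ?case unfolding pc_moment.simps r p by simp
next
  case (2 \<beta>)
  then show ?case by (simp add: diff_divide_distrib)
next
  case (3 \<beta> k)
  show ?case by (simp add: 3 algebra_simps)
qed

lemma diffs_pc_coeff_0: "diffs (pc_coeff \<beta>) 0 = - pc_coeff (\<beta> - 1) 0"
  by (simp add: diffs_def pc_coeff_def diff_divide_distrib)

lemma diffs_pc_coeff_Suc:
  "diffs (pc_coeff \<beta>) (Suc j) = pc_coeff \<beta> j - pc_coeff (\<beta> - 1) (Suc j)"
proof -
  have nz: "real j + 1 \<noteq> 0" "real j + 2 \<noteq> 0" by linarith+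
  have "diffs (pc_coeff \<beta>) (Suc j)
      = (real j + 2) * ((\<beta> + j) / ((real j + 1) * (real j + 2)) * pc_coeff \<beta> j)"
    by (simp add: diffs_def pc_coeff_Suc_Suc add.commute)
  also have "\<dots> = (\<beta> + j) / (real j + 1) * pc_coeff \<beta> j"
    using nz by simp
  also have "\<dots> = pc_coeff \<beta> j - (1 - \<beta>) / (real j + 1) * pc_coeff \<beta> j"
    using nz by (simp add: field_simps)
  also have "(1 - \<beta>) / (real j + 1) * pc_coeff \<beta> j = pc_coeff (\<beta> - 1) (Suc j)"
    by (simp add: pc_coeff_def pc_moment_pred_Suc field_simps)
  finally show ?thesis .
qed

lemma pc_series_has_derivative:
  "(pc_series \<beta> has_real_derivative z * pc_series \<beta> z - pc_series (\<beta> - 1) z) (at z)"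
proof -
  have deriv: "(pc_series \<beta> has_real_derivative (\<Sum>n. diffs (pc_coeff \<beta>) n * z^n)) (at z)"
    unfolding pc_series_def[abs_def]
    by (rule termdiffs_strong[OF summable_rabs_cancel[OF summable_abs_pc_coeff[of \<beta> "\<bar>z\<bar> + 1"]]])
       simp
  define shifted where "shifted n = (if n = 0 then 0 else pc_coeff \<beta> (n - 1) * z^n)" for n
  have "(\<lambda>n. shifted (Suc n)) sums (z * pc_series \<beta> z)"
    using sums_mult[OF pc_series_sums, of z] by (simp add: shifted_def mult_ac)
  then have "shifted sums (z * pc_series \<beta> z)"
    by (subst (asm) sums_Suc_iff) (simp add: shifted_def)
  from sums_diff[OF this pc_series_sums]
  have "(\<lambda>n. diffs (pc_coeff \<beta>) n * z^n) sums (z * pc_series \<beta> z - pc_series (\<beta> - 1) z)"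
  proof (rule sums_cong[THEN iffD1, rotated])
    fix n show "shifted n - pc_coeff (\<beta> - 1) n * z^n = diffs (pc_coeff \<beta>) n * z^n"
      by (cases n) (simp_all add: shifted_def diffs_pc_coeff_0 diffs_pc_coeff_Suc algebra_simps)
  qed
  with deriv show ?thesis by (simp add: sums_iff)
qed

lemma pcPhi_has_derivative: "(pcPhi \<beta> has_real_derivative - pcPhi (\<beta> - 1) z) (at z)"
proof -
  have "((\<lambda>z. exp (- (z^2) / 2) * pc_series \<beta> z) has_real_derivative
      exp (- (z^2) / 2) * (- z) * pc_series \<beta> z
        + exp (- (z^2) / 2) * (z * pc_series \<beta> z - pc_series (\<beta> - 1) z)) (at z)"
    by (auto intro!: derivative_eq_intros pc_series_has_derivative)
  then show ?thesis unfolding pcPhi_def[abs_def] by (simp add: algebra_simps)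
qed

lemma pc_series_0: "pc_series 0 z = 1"
proof -
  have "pc_moment 0 (Suc k) = 0 \<and> pc_moment 0 (Suc (Suc k)) = 0" for k
    by (induction k) simp_all
  then have "(\<lambda>k. pc_coeff 0 k * z^k) = (\<lambda>k. if k = 0 then 1 else 0)"
    by (intro ext, case_tac k) (simp_all add: pc_coeff_def rGamma_inverse_Gamma Gamma_one_half_real)
  then have "(\<lambda>k. pc_coeff 0 k * z^k) sums 1"
    using sums_single[of 0 "\<lambda>_. 1::real"] by simp
  then show ?thesis
    using pc_series_sums sums_unique2 by blast
qed

lemma pcPhi_0: "pcPhi 0 z = exp (- (z^2) / 2)"
  by (simp add: pcPhi_def pc_series_0)

lemma pc_moment_even: "pc_moment \<beta> (2 * j) = pc_moment \<beta> 0 * pochhammer (\<beta> / 2) j * 2^j"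
  by (induction j) (simp_all add: pochhammer_rec' algebra_simps del: pc_moment.simps(1,2))

lemma pc_moment_odd:
  "pc_moment \<beta> (2 * j + 1) = pc_moment \<beta> 1 * pochhammer ((\<beta> + 1) / 2) j * 2^j"
  by (induction j) (simp_all add: pochhammer_rec' algebra_simps del: pc_moment.simps(1,2))

lemma pc_series_eq_kummerM:
  "pc_series \<beta> z = pc_moment \<beta> 0 * kummerM (\<beta> / 2) (1 / 2) (z^2 / 2)
                    - pc_moment \<beta> 1 * z * kummerM ((\<beta> + 1) / 2) (3 / 2) (z^2 / 2)"
proof -
  have poch_nz: "pochhammer (1 / 2 :: real) j \<noteq> 0" "pochhammer (3 / 2 :: real) j \<noteq> 0" for j
    by (simp_all add: pochhammer_eq_0_iff)
  have four: "(2::real)^(2 * j) = 2^j * 2^j" for j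
    by (simp add: power_add[symmetric] mult_2)
  have square_power: "(w^j)^2 = (w^2)^j" for w :: real and j
    by (simp flip: power_mult add: mult.commute)
  have even: "pc_coeff \<beta> (2 * j) * z^(2 * j) = pc_moment \<beta> 0 *
      (pochhammer (\<beta> / 2) j / (pochhammer (1 / 2) j * fact j) * (z^2 / 2)^j)" for j
    unfolding pc_coeff_def pc_moment_even fact_double four
    using poch_nz by (simp add: power_mult power_divide square_power field_simps del: pc_moment.simps)
  have odd: "pc_coeff \<beta> (2 * j + 1) * z^(2 * j + 1) = - (pc_moment \<beta> 1 * z) *
      (pochhammer ((\<beta> + 1) / 2) j / (pochhammer (3 / 2) j * fact j) * (z^2 / 2)^j)" for j
    unfolding pc_coeff_def pc_moment_odd fact_double_Suc four
    using poch_nz by (simp add: power_mult power_divide square_power field_simps del: pc_moment.simps)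
  have "strict_mono (\<lambda>j::nat. 2 * j)" "strict_mono (\<lambda>j::nat. 2 * j + 1)"
    by (auto simp: strict_mono_def)
  note subseries_summable = this[THEN summable_strict_mono_reindex_abs, OF summable_abs_pc_coeff]
  have evens: "(\<lambda>j. pc_coeff \<beta> (2 * j) * z^(2 * j)) sums
      (pc_moment \<beta> 0 * kummerM (\<beta> / 2) (1 / 2) (z^2 / 2))"
    using subseries_summable(1)[of \<beta> z] unfolding even kummerM_def by (rule sums_cmult_suminf)
  have odds: "(\<lambda>j. pc_coeff \<beta> (2 * j + 1) * z^(2 * j + 1)) sums
      (- (pc_moment \<beta> 1 * z) * kummerM ((\<beta> + 1) / 2) (3 / 2) (z^2 / 2))"
    using subseries_summable(2)[of \<beta> z] unfolding odd kummerM_def by (rule sums_cmult_suminf)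
  from sums_if[OF odds evens] have "(\<lambda>n. pc_coeff \<beta> n * z^n) sums
      (- (pc_moment \<beta> 1 * z) * kummerM ((\<beta> + 1) / 2) (3 / 2) (z^2 / 2)
        + pc_moment \<beta> 0 * kummerM (\<beta> / 2) (1 / 2) (z^2 / 2))"
    by (rule sums_cong[THEN iffD1, rotated]) (auto elim!: evenE oddE)
  with pc_series_sums show ?thesis
    by (simp add: sums_iff)
qed

lemma pcU_eq_pc_series: "pcU (\<beta> - 1 / 2) z = exp (- (z^2) / 4) * pc_series \<beta> z"
proof -
  have shifts: "3 / 4 + (\<beta> - 1 / 2) / 2 = (\<beta> + 1) / 2" "(\<beta> - 1 / 2) / 2 + 1 / 4 = \<beta> / 2"
    "1 / 4 + (\<beta> - 1 / 2) / 2 = \<beta> / 2" "(\<beta> - 1 / 2) / 2 - 1 / 4 = \<beta> / 2 - 1 / 2"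
    "(\<beta> - 1 / 2) / 2 + 3 / 4 = (\<beta> + 1) / 2"
    by (simp_all add: field_simps)
  show ?thesis
    unfolding pcU_def shifts pc_series_eq_kummerM One_nat_def pc_moment.simps
    by (simp add: algebra_simps)
qed

section \<open>The Laplace integral\<close>

lemma half_gauss_moment_eq_pc_moment_0_1:
  assumes "\<beta> > (0::real)"
  shows "2 powr (\<beta> / 2 - 1) * Gamma (\<beta> / 2) = Gamma \<beta> * pc_moment \<beta> 0"
    and "2 powr ((\<beta> + 1) / 2 - 1) * Gamma ((\<beta> + 1) / 2) = Gamma \<beta> * pc_moment \<beta> 1"
proof -
  have duplication: "Gamma (\<beta> / 2) * Gamma ((\<beta> + 1) / 2) = 2 powr (1 - \<beta>) * sqrt pi * Gamma \<beta>"
    using Gamma_legendre_duplication_real[of "\<beta> / 2"] assms by (simp add: add_divide_distrib)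
  have "2 powr (\<beta> / 2 - 1) * Gamma (\<beta> / 2) * (Gamma ((\<beta> + 1) / 2) * 2 powr (\<beta> / 2))
      = (2 powr (\<beta> / 2 - 1) * 2 powr (\<beta> / 2) * 2 powr (1 - \<beta>)) * sqrt pi * Gamma \<beta>"
    (is "?lhs = _")
    using duplication by (simp add: mult_ac)
  also have "2 powr (\<beta> / 2 - 1) * 2 powr (\<beta> / 2) * 2 powr (1 - \<beta>) = (1::real)"
    by (simp add: powr_add[symmetric])
  finally have "?lhs = sqrt pi * Gamma \<beta>" by simp
  moreover have "Gamma ((\<beta> + 1) / 2) > 0"
    using assms by simp
  ultimately show "2 powr (\<beta> / 2 - 1) * Gamma (\<beta> / 2) = Gamma \<beta> * pc_moment \<beta> 0"
    by (simp add: rGamma_inverse_Gamma field_simps)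
  have "2 powr ((\<beta> + 1) / 2 - 1) * Gamma ((\<beta> + 1) / 2) * (Gamma (\<beta> / 2) * 2 powr (\<beta> / 2 - 1 / 2))
      = (2 powr ((\<beta> + 1) / 2 - 1) * 2 powr (\<beta> / 2 - 1 / 2) * 2 powr (1 - \<beta>)) * sqrt pi * Gamma \<beta>"
    (is "?lhs = _")
    using duplication by (simp add: mult_ac)
  also have "2 powr ((\<beta> + 1) / 2 - 1) * 2 powr (\<beta> / 2 - 1 / 2) * 2 powr (1 - \<beta>) = (1::real)"
    by (simp add: powr_add[symmetric] field_simps)
  finally have "?lhs = sqrt pi * Gamma \<beta>" by simp
  moreover have "Gamma (\<beta> / 2) > 0"
    using assms by simp
  ultimately show "2 powr ((\<beta> + 1) / 2 - 1) * Gamma ((\<beta> + 1) / 2) = Gamma \<beta> * pc_moment \<beta> 1"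
    by (simp add: rGamma_inverse_Gamma field_simps)
qed

lemma half_gauss_moment_eq_pc_moment:
  assumes "\<beta> > (0::real)"
  shows "2 powr ((\<beta> + real k) / 2 - 1) * Gamma ((\<beta> + real k) / 2) = Gamma \<beta> * pc_moment \<beta> k"
  using assms
proof (induction \<beta> k rule: pc_moment.induct)
  case (1 \<beta>)
  then show ?case using half_gauss_moment_eq_pc_moment_0_1(1) by simp
next
  case (2 \<beta>)
  then show ?case using half_gauss_moment_eq_pc_moment_0_1(2) by simp
next
  case (3 \<beta> k)
  define \<gamma> where "\<gamma> = (\<beta> + real k) / 2"
  have "\<gamma> > 0" using 3 by (simp add: \<gamma>_def)
  then have Gamma_succ: "Gamma (\<gamma> + 1) = \<gamma> * Gamma \<gamma>"
    by (intro Gamma_plus1) (auto dest: nonpos_Ints_nonpos)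
  have half_succ: "(\<beta> + real (Suc (Suc k))) / 2 = \<gamma> + 1"
    by (simp add: \<gamma>_def field_simps)
  have "2 powr ((\<beta> + real (Suc (Suc k))) / 2 - 1) * Gamma ((\<beta> + real (Suc (Suc k))) / 2)
      = 2 * \<gamma> * (2 powr (\<gamma> - 1) * Gamma \<gamma>)"
    unfolding half_succ by (simp add: Gamma_succ powr_diff)
  also have "\<dots> = Gamma \<beta> * pc_moment \<beta> (Suc (Suc k))"
    using 3(1)[OF 3(2)] by (simp add: \<gamma>_def)
  finally show ?case .
qed

lemma pc_moment_pos:
  assumes "\<beta> > (0::real)"
  shows "pc_moment \<beta> k > 0"
proof -
  have "Gamma \<beta> * pc_moment \<beta> k > 0"
    unfolding half_gauss_moment_eq_pc_moment[OF assms, symmetric] using assms by simp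
  then show ?thesis
    using Gamma_real_pos[OF assms] zero_less_mult_pos by blast
qed

lemma has_bochner_integral_pc_moment:
  assumes "\<beta> > (0::real)"
  shows "has_bochner_integral lborel
           (\<lambda>s. indicator {0<..} s * (s powr (\<beta> - 1) * exp (- (s^2) / 2)) * s^k)
           (Gamma \<beta> * pc_moment \<beta> k)"
proof -
  have kernel: "(\<lambda>s. indicator {0<..} s * (s powr (\<beta> + real k - 1) * exp (- (s^2) / 2)))
      = (\<lambda>s. indicator {0<..} s * (s powr (\<beta> - 1) * exp (- (s^2) / 2)) * s^k)"
  proof
    fix s :: real
    show "indicator {0<..} s * (s powr (\<beta> + real k - 1) * exp (- (s^2) / 2))
        = indicator {0<..} s * (s powr (\<beta> - 1) * exp (- (s^2) / 2)) * s^k"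
    proof (cases "s > 0")
      case True
      then have "s powr (\<beta> + real k - 1) = s powr (\<beta> - 1) * s^k"
        by (simp add: powr_add[symmetric] powr_realpow[symmetric] algebra_simps)
      then show ?thesis by simp
    qed simp
  qed
  have "has_bochner_integral lborel
      (\<lambda>s. indicator {0<..} s * (s powr (\<beta> + real k - 1) * exp (- (s^2) / 2)))
      (Gamma \<beta> * pc_moment \<beta> k)"
    using has_bochner_integral_half_gauss_moment[of "\<beta> + real k"] assms
    by (simp add: half_gauss_moment_eq_pc_moment[OF assms])
  then show ?thesis
    by (simp only: kernel)
qed

lemma has_bochner_integral_pc_series:
  assumes "\<beta> > (0::real)"
  shows "has_bochner_integral lborel
           (\<lambda>s. indicator {0<..} s * (s powr (\<beta> - 1) * exp (- (s^2) / 2) * exp (- z * s)))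
           (Gamma \<beta> * pc_series \<beta> z)"
proof -
  define K where "K s = indicator {0<..} s * (s powr (\<beta> - 1) * exp (- (s^2) / 2))" for s :: real
  define f where "f k s = (- z)^k / fact k * (K s * s^k)" for k s
  have f: "has_bochner_integral lborel (f k) (Gamma \<beta> * (pc_coeff \<beta> k * z^k))" for k
  proof -
    have "(- z)^k / fact k * (Gamma \<beta> * pc_moment \<beta> k) = Gamma \<beta> * (pc_coeff \<beta> k * z^k)"
      unfolding power_minus[of z k] pc_coeff_def by simp
    with has_bochner_integral_mult_right[OF has_bochner_integral_pc_moment[OF assms, folded K_def]]
    show ?thesis
      unfolding f_def by metis
  qed
  have "has_bochner_integral lborel (\<lambda>s. norm (f k s)) (Gamma \<beta> * \<bar>pc_coeff \<beta> k * z^k\<bar>)" for k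
  proof -
    have "norm (f k s) = \<bar>z\<bar>^k / fact k * (K s * s^k)" for s
      by (cases "s > 0") (simp_all add: f_def K_def abs_mult power_abs)
    moreover have "\<bar>z\<bar>^k / fact k * (Gamma \<beta> * pc_moment \<beta> k) = Gamma \<beta> * \<bar>pc_coeff \<beta> k * z^k\<bar>"
      using pc_moment_pos[OF assms, of k] by (simp add: pc_coeff_def abs_mult power_abs)
    ultimately show ?thesis
      using has_bochner_integral_mult_right[OF has_bochner_integral_pc_moment[OF assms, of k, folded K_def],
          of "\<bar>z\<bar>^k / fact k"]
      by simp
  qed
  then have "(\<integral>s. norm (f k s) \<partial>lborel) = Gamma \<beta> * \<bar>pc_coeff \<beta> k * z^k\<bar>" for k
    by (rule has_bochner_integral_integral_eq)
  then have norm_summable: "summable (\<lambda>k. \<integral>s. norm (f k s) \<partial>lborel)"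
    by (simp add: summable_abs_pc_coeff)
  have f_exp: "f k s = K s * ((- z * s)^k / fact k)" for k s
    using power_mult_distrib[of "- z" s k] by (simp add: f_def)
  have "(\<lambda>k. f k s) sums (K s * exp (- z * s))" for s
    unfolding f_exp using exp_converges[of "- z * s"] by (intro sums_mult) (simp add: field_simps)
  moreover have "summable (\<lambda>k. norm (f k s))" for s
    unfolding f_exp norm_mult
    using summable_exp[of "\<bar>z * s\<bar>"]
    by (intro summable_mult) (simp add: power_abs abs_mult divide_inverse mult.commute)
  ultimately have "has_bochner_integral lborel (\<lambda>s. K s * exp (- z * s))
      (\<Sum>k. Gamma \<beta> * (pc_coeff \<beta> k * z^k))"
    by (rule has_bochner_integral_suminf[OF f _ _ norm_summable])
  then show ?thesis
    using sums_unique[OF sums_mult[OF pc_series_sums, of "Gamma \<beta>"]] by (simp add: K_def mult_ac)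
qed

lemma has_bochner_integral_pcPhi:
  assumes "\<beta> > (0::real)"
  shows "has_bochner_integral lborel
           (\<lambda>s. indicator {0<..} s * (s powr (\<beta> - 1) * exp (- ((z + s)^2) / 2)))
           (Gamma \<beta> * pcPhi \<beta> z)"
proof -
  have "exp (- ((z + s)^2) / 2) = exp (- (z^2) / 2) * (exp (- (s^2) / 2) * exp (- z * s))" for s
    by (simp add: exp_add[symmetric] power2_eq_square field_simps)
  then show ?thesis
    using has_bochner_integral_mult_right[OF has_bochner_integral_pc_series[OF assms, of z],
        of "exp (- (z^2) / 2)"]
    by (simp add: pcPhi_def mult_ac)
qed

section \<open>Liouville operators applied to a Gaussian\<close>

lemma liouville_int_minus_gauss:
  assumes "\<beta> > 0" and "t > 0"
  shows "liouville_int_minus \<beta> (\<lambda>y. exp (- (y^2) / (2 * t))) x = t powr (\<beta> / 2) * pcPhi \<beta> (x / sqrt t)"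
proof -
  define r where "r = sqrt t"
  define z where "z = x / r"
  have "r > 0" "t = r^2" "x = r * z"
    using assms by (simp_all add: r_def z_def)
  define F where "F y = indicator {x<..} y * ((y - x) powr (\<beta> - 1) * exp (- (y^2) / (2 * t)))" for y
  have F_affine: "F (x + r * s) =
      r powr (\<beta> - 1) * (indicator {0<..} s * (s powr (\<beta> - 1) * exp (- ((z + s)^2) / 2)))" for s
  proof (cases "s > 0")
    case True
    have "(x + r * s - x) powr (\<beta> - 1) = r powr (\<beta> - 1) * s powr (\<beta> - 1)"
      using True \<open>r > 0\<close> by (simp add: powr_mult)
    moreover have "(x + r * s)^2 / (2 * t) = (z + s)^2 / 2"
      using \<open>r > 0\<close> unfolding \<open>t = r^2\<close> \<open>x = r * z\<close> by (simp add: power2_eq_square field_simps)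
    ultimately show ?thesis
      using True \<open>r > 0\<close> by (simp add: F_def)
  qed (use \<open>r > 0\<close> in \<open>simp add: F_def zero_less_mult_iff\<close>)
  have "(LBINT y:{x<..}. (y - x) powr (\<beta> - 1) * exp (- (y^2) / (2 * t))) = integral\<^sup>L lborel F"
    by (simp add: set_lebesgue_integral_def F_def[abs_def])
  also have "\<dots> = r * integral\<^sup>L lborel (\<lambda>s. F (x + r * s))"
    using lborel_integral_real_affine[of r F x] \<open>r > 0\<close> by simp
  also have "\<dots> = r * r powr (\<beta> - 1) * (Gamma \<beta> * pcPhi \<beta> z)"
    unfolding F_affine using has_bochner_integral_pcPhi[OF assms(1), of z]
    by (simp add: has_bochner_integral_integral_eq)
  also have "r * r powr (\<beta> - 1) = t powr (\<beta> / 2)"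
  proof -
    have "r * r powr (\<beta> - 1) = r powr \<beta>"
      using \<open>r > 0\<close> by (simp add: powr_mult_base)
    also have "\<dots> = t powr (\<beta> / 2)"
      using assms(2) by (simp add: r_def powr_half_sqrt[symmetric] powr_powr)
    finally show ?thesis .
  qed
  finally show ?thesis
    using Gamma_real_pos[OF assms(1)] by (simp add: liouville_int_minus_def z_def r_def)
qed

lemma higher_deriv_pcPhi_scaled:
  "(deriv ^^ j) (\<lambda>x. C * pcPhi \<gamma> (x / r)) = (\<lambda>x. (-1)^j * C / r^j * pcPhi (\<gamma> - real j) (x / r))"
proof (induction j)
  case (Suc j)
  have "((\<lambda>x. (-1)^j * C / r^j * pcPhi (\<gamma> - real j) (x / r)) has_real_derivative
      (-1)^j * C / r^j * (- pcPhi (\<gamma> - real j - 1) (x / r) * (1 / r))) (at x)" for x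
    by (intro DERIV_cmult DERIV_chain2[OF pcPhi_has_derivative] DERIV_cdivide DERIV_ident)
  then have "deriv (\<lambda>x. (-1)^j * C / r^j * pcPhi (\<gamma> - real j) (x / r))
      = (\<lambda>x. (-1)^Suc j * C / r^Suc j * pcPhi (\<gamma> - real (Suc j)) (x / r))"
    by (intro ext DERIV_imp_deriv) (simp add: diff_diff_add field_simps)
  with Suc.IH show ?case
    by simp
qed simp

lemma liouville_deriv_minus_gauss:
  assumes "t > 0"
  shows "liouville_deriv_minus \<alpha> (\<lambda>y. exp (- (y^2) / (2 * t))) x
           = t powr (- \<alpha> / 2) * pcPhi (- \<alpha>) (x / sqrt t)"
proof -
  have sqrt_power: "sqrt t ^ n = t powr (real n / 2)" for n
    using assms by (simp add: powr_half_sqrt[symmetric] powr_realpow[symmetric] powr_powr)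
  have sign: "(-1::real)^n * (-1)^n = 1" for n
    by (simp add: power_mult_distrib[symmetric])
  show ?thesis
  proof (cases "\<alpha> \<in> \<nat>")
    case True
    then obtain n where n: "\<alpha> = real n"
      by (auto elim!: Nats_cases)
    have gauss: "(\<lambda>y. exp (- (y^2) / (2 * t))) = (\<lambda>y. 1 * pcPhi 0 (y / sqrt t))"
      using assms by (simp add: pcPhi_0 power_divide ac_simps)
    have "liouville_deriv_minus \<alpha> (\<lambda>y. exp (- (y^2) / (2 * t))) x
        = ((-1)^n * (-1)^n) / sqrt t ^ n * pcPhi (- real n) (x / sqrt t)"
      using True unfolding liouville_deriv_minus_def n gauss higher_deriv_pcPhi_scaled by simp
    then show ?thesis
      by (simp add: sign sqrt_power n powr_minus_divide)
  next
    case False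
    define m where "m = nat \<lfloor>\<alpha>\<rfloor> + 1"
    have "real m - \<alpha> > 0"
      unfolding m_def by linarith
    from liouville_int_minus_gauss[OF this assms]
    have integral: "liouville_int_minus (real m - \<alpha>) (\<lambda>y. exp (- (y^2) / (2 * t)))
        = (\<lambda>x. t powr ((real m - \<alpha>) / 2) * pcPhi (real m - \<alpha>) (x / sqrt t))"
      by blast
    have "liouville_deriv_minus \<alpha> (\<lambda>y. exp (- (y^2) / (2 * t))) x
        = ((-1)^m * (-1)^m) * (t powr ((real m - \<alpha>) / 2) / sqrt t ^ m)
            * pcPhi (real m - \<alpha> - real m) (x / sqrt t)"
      using False unfolding liouville_deriv_minus_def Let_def m_def[symmetric] integral
        higher_deriv_pcPhi_scaled by simp
    also have "t powr ((real m - \<alpha>) / 2) / sqrt t ^ m = t powr (- \<alpha> / 2)"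
      by (simp add: sqrt_power powr_diff[symmetric] diff_divide_distrib)
    finally show ?thesis
      by (simp add: sign)
  qed
qed

theorem mainTheorem2:
  fixes \<alpha> t x :: real
  assumes "\<alpha> > 0" and "t > 0"
  shows "calH \<alpha> x t =
    t powr \<alpha> * exp (x^2 / (2 * t)) *
      liouville_deriv_minus \<alpha> (\<lambda>y. exp (- (y^2) / (2 * t))) x"
proof -
  define z where "z = x / sqrt t"
  have deriv: "liouville_deriv_minus \<alpha> (\<lambda>y. exp (- (y^2) / (2 * t))) x
      = t powr (- \<alpha> / 2) * (exp (- (z^2) / 2) * pc_series (- \<alpha>) z)"
    using liouville_deriv_minus_gauss[OF assms(2)] by (simp add: pcPhi_def z_def)
  have z2: "z^2 = x^2 / t"
    using assms(2) by (simp add: z_def power_divide)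
  have "calH \<alpha> x t = t powr (\<alpha> / 2) * (exp (x^2 / (4 * t)) * exp (- (z^2) / 4)) * pc_series (- \<alpha>) z"
    by (simp add: calH_def pcU_eq_pc_series[of "- \<alpha>", folded z_def] z_def)
  also have "exp (x^2 / (4 * t)) * exp (- (z^2) / 4) = 1"
    by (simp add: z2 flip: exp_add)
  also have "t powr (\<alpha> / 2) = t powr \<alpha> * t powr (- \<alpha> / 2)"
    by (simp flip: powr_add)
  also have "1 = exp (x^2 / (2 * t)) * exp (- (z^2) / 2)"
    by (simp add: z2 flip: exp_add)
  finally show ?thesis
    unfolding deriv by (simp only: mult_ac)
qed

end
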